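(* A finite group $G$ is mixable if and only if every nontrivial irreducible complex representation of $G$ is mixable.
   Context: A finite group $G$ is mixable if there exist fixed elements $g_1,\dots,g_k\in G$ and independent Bernoulli random variables $\epsilon_i\sim\mathrm{Ber}(p_i)$, $p_i\in[0,1]$, such that $g_1^{\epsilon_1}\cdots g_k^{\epsilon_k}$ is distributed exactly uniformly on $G$. An irreducible representation $\rho: G\to\mathrm{GL}_d(\mathbb{C})$ is mixable if there exist $g_1,\dots,g_k\in G$ and $p_1,\dots,p_k\in[0,1]$ with $\prod_{i=1}^k\big((1-p_i)I+p_i\rho(g_i)\big)=0$. (Equivalently, the theorem says $G$ is mixable iff its regular representation is mixable, a representation being called mixable when all its nontrivial irreducible components are.) *)

theory Defs
  imports "HOL-Algebra.Group" "HOL-Probability.Probability_Mass_Function"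
    "Jordan_Normal_Form.Matrix"
begin

(* Random product g_1^{e_1} ... g_k^{e_k} with independent e_i ~ Ber(p_i);
   the list entries are the pairs (g_i, p_i), leftmost factor first. *)
fun mix_pmf :: "('a, 'b) monoid_scheme \<Rightarrow> ('a \<times> real) list \<Rightarrow> 'a pmf" where
  "mix_pmf G [] = return_pmf \<one>\<^bsub>G\<^esub>"
| "mix_pmf G ((g, p) # xs) =
     bind_pmf (bernoulli_pmf p) (\<lambda>e.
       bind_pmf (mix_pmf G xs) (\<lambda>y. return_pmf (if e then g \<otimes>\<^bsub>G\<^esub> y else y)))"

definition mixable_group :: "('a, 'b) monoid_scheme \<Rightarrow> bool" where
  "mixable_group G \<longleftrightarrow>
     (\<exists>xs. (\<forall>(g, p) \<in> set xs. g \<in> carrier G \<and> 0 \<le> p \<and> p \<le> 1) \<and>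
           mix_pmf G xs = pmf_of_set (carrier G))"

definition representation :: "('a, 'b) monoid_scheme \<Rightarrow> nat \<Rightarrow> ('a \<Rightarrow> complex mat) \<Rightarrow> bool" where
  "representation G d \<rho> \<longleftrightarrow>
     (\<forall>g \<in> carrier G. \<rho> g \<in> carrier_mat d d) \<and>
     \<rho> \<one>\<^bsub>G\<^esub> = 1\<^sub>m d \<and>
     (\<forall>g \<in> carrier G. \<forall>h \<in> carrier G. \<rho> (g \<otimes>\<^bsub>G\<^esub> h) = \<rho> g * \<rho> h)"

definition invariant_subspace :: "('a, 'b) monoid_scheme \<Rightarrow> nat \<Rightarrow> ('a \<Rightarrow> complex mat) \<Rightarrow> complex vec set \<Rightarrow> bool" where
  "invariant_subspace G d \<rho> W \<longleftrightarrow>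
     W \<subseteq> carrier_vec d \<and> 0\<^sub>v d \<in> W \<and>
     (\<forall>v \<in> W. \<forall>w \<in> W. v + w \<in> W) \<and>
     (\<forall>c. \<forall>v \<in> W. c \<cdot>\<^sub>v v \<in> W) \<and>
     (\<forall>g \<in> carrier G. \<forall>v \<in> W. \<rho> g *\<^sub>v v \<in> W)"

definition irreducible_rep :: "('a, 'b) monoid_scheme \<Rightarrow> nat \<Rightarrow> ('a \<Rightarrow> complex mat) \<Rightarrow> bool" where
  "irreducible_rep G d \<rho> \<longleftrightarrow>
     representation G d \<rho> \<and> d > 0 \<and>
     (\<forall>W. invariant_subspace G d \<rho> W \<longrightarrow> W = {0\<^sub>v d} \<or> W = carrier_vec d)"

definition trivial_rep :: "('a, 'b) monoid_scheme \<Rightarrow> nat \<Rightarrow> ('a \<Rightarrow> complex mat) \<Rightarrow> bool" where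
  "trivial_rep G d \<rho> \<longleftrightarrow> (\<forall>g \<in> carrier G. \<rho> g = 1\<^sub>m d)"

definition mixable_rep :: "('a, 'b) monoid_scheme \<Rightarrow> nat \<Rightarrow> ('a \<Rightarrow> complex mat) \<Rightarrow> bool" where
  "mixable_rep G d \<rho> \<longleftrightarrow>
     (\<exists>xs. (\<forall>(g, p) \<in> set xs. g \<in> carrier G \<and> 0 \<le> p \<and> p \<le> 1) \<and>
           foldr (\<lambda>(g, p) M. (complex_of_real (1 - p) \<cdot>\<^sub>m 1\<^sub>m d + complex_of_real p \<cdot>\<^sub>m \<rho> g) * M)
             xs (1\<^sub>m d) = 0\<^sub>m d d)"

end

theory Submission
  imports Defs "Jordan_Normal_Form.Determinant"
begin

(*
  For a list of pairs (g_i, p_i) let mu be the law of the random product g_1^e_1 ... g_k^e_k.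
  Expanding the product of the factors (1 - p_i) I + p_i rho(g_i) gives the Fourier transform
  of mu at rho, i.e. sum_x mu(x) rho(x).

  If mu is uniform, this matrix A satisfies rho(h) A = A, so its range consists of rho-fixed
  vectors; for a nontrivial irreducible rho these form an invariant subspace other than the whole
  space, hence only 0 is fixed and A = 0.

  Conversely, by induction on the dimension every representation admits a list whose product maps
  all vectors to fixed vectors: for irreducible representations take the empty list (trivial case)
  or a mixing list (nontrivial case); otherwise Maschke's theorem splits the representation into
  two smaller ones, and the concatenation of their lists works. For the regular representation
  the column of the product at the identity is the vector of probabilities mu(x); being fixed by
  all left translations it is constant, so mu is uniform.
*)

no_notation vec_nth (infixl "$" 90)

section \<open>Column spaces of matrices\<close>

definition vec_subspace :: "nat \<Rightarrow> 'a :: field vec set \<Rightarrow> bool" where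
  "vec_subspace d W \<longleftrightarrow> W \<subseteq> carrier_vec d \<and> 0\<^sub>v d \<in> W \<and>
     (\<forall>v \<in> W. \<forall>w \<in> W. v + w \<in> W) \<and> (\<forall>c. \<forall>v \<in> W. c \<cdot>\<^sub>v v \<in> W)"

definition mat_range :: "'a :: semiring_0 mat \<Rightarrow> 'a vec set" where
  "mat_range A = (\<lambda>x. A *\<^sub>v x) ` carrier_vec (dim_col A)"

definition inj_mat :: "'a :: semiring_0 mat \<Rightarrow> bool" where
  "inj_mat A \<longleftrightarrow> (\<forall>x \<in> carrier_vec (dim_col A). A *\<^sub>v x = 0\<^sub>v (dim_row A) \<longrightarrow> x = 0\<^sub>v (dim_col A))"

lemma mult_mat_vec_zero [simp]: "A \<in> carrier_mat r c \<Longrightarrow> A *\<^sub>v 0\<^sub>v c = 0\<^sub>v r"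
  by (intro eq_vecI) (auto simp: scalar_prod_def)

lemma zero_mult_mat_vec [simp]: "v \<in> carrier_vec c \<Longrightarrow> 0\<^sub>m r c *\<^sub>v v = (0\<^sub>v r :: 'a :: semiring_0 vec)"
  by (intro eq_vecI) (auto simp: scalar_prod_def)

lemma smult_mat_mult_vec:
  "A \<in> carrier_mat r c \<Longrightarrow> v \<in> carrier_vec c \<Longrightarrow> (a \<cdot>\<^sub>m A) *\<^sub>v v = (a :: 'a :: comm_semiring_0) \<cdot>\<^sub>v (A *\<^sub>v v)"
  by (intro eq_vecI) (auto simp: scalar_prod_def sum_distrib_left ac_simps)

lemma index_mult_mat_vec_sum:
  "A \<in> carrier_mat r c \<Longrightarrow> x \<in> carrier_vec c \<Longrightarrow> i < r \<Longrightarrow> (A *\<^sub>v x) $ i = (\<Sum>j<c. A $$ (i, j) * x $ j)"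
  by (auto simp: scalar_prod_def lessThan_atLeast0 ac_simps)

lemma col_eq_mult_unit_vec: "(A :: 'a :: semiring_1 mat) \<in> carrier_mat d m \<Longrightarrow> j < m \<Longrightarrow> col A j = A *\<^sub>v unit_vec m j"
  by (intro eq_vecI) auto

lemma mat_eq_on_unit_vecs:
  fixes A B :: "'a :: semiring_1 mat"
  assumes "A \<in> carrier_mat d m" "B \<in> carrier_mat d m" "\<And>j. j < m \<Longrightarrow> A *\<^sub>v unit_vec m j = B *\<^sub>v unit_vec m j"
  shows "A = B"
  using assms by (intro mat_col_eqI) (simp_all add: col_eq_mult_unit_vec)

lemma mat_range_subset_carrier: "A \<in> carrier_mat d m \<Longrightarrow> mat_range A \<subseteq> carrier_vec d"
  by (auto simp: mat_range_def)

lemma mat_range_zero_imp_zero: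
  fixes A :: "'a :: semiring_1 mat"
  assumes "A \<in> carrier_mat d m" "mat_range A \<subseteq> {0\<^sub>v d}"
  shows "A = 0\<^sub>m d m"
proof (rule mat_eq_on_unit_vecs[OF assms(1) zero_carrier_mat])
  fix j assume "j < m"
  have "A *\<^sub>v unit_vec m j \<in> mat_range A"
    using assms(1) by (simp add: mat_range_def)
  then show "A *\<^sub>v unit_vec m j = 0\<^sub>m d m *\<^sub>v unit_vec m j"
    using assms(2) by auto
qed

lemma inj_mat_dim_le:
  fixes A :: "'a :: field mat"
  assumes A: "A \<in> carrier_mat d m" and inj: "inj_mat A"
  shows "m \<le> d"
proof (rule ccontr)
  assume "\<not> m \<le> d"
  \<comment> \<open>Padding \<open>A\<close> with zero rows gives a singular square matrix, whose kernel vectors lie in the kernel of \<open>A\<close>.\<close>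
  define A' where "A' = mat m m (\<lambda>(i, j). if i < d then A $$ (i, j) else 0)"
  have A': "A' \<in> carrier_mat m m" by (simp add: A'_def)
  have "A' = mat\<^sub>r m m (\<lambda>i. if i = m - 1 then 0\<^sub>v m else row A' i)"
    using \<open>\<not> m \<le> d\<close> by (intro eq_matI) (auto simp: A'_def)
  then have "det A' = 0"
    using det_row_0[of "m - 1" m "\<lambda>i. row A' i"] \<open>\<not> m \<le> d\<close> A' by auto
  then obtain v where v: "v \<in> carrier_vec m" "v \<noteq> 0\<^sub>v m" "A' *\<^sub>v v = 0\<^sub>v m"
    using det_0_iff_vec_prod_zero_field[OF A'] by auto
  have "A *\<^sub>v v = 0\<^sub>v d"
  proof (rule eq_vecI)
    fix i assume "i < dim_vec (0\<^sub>v d :: 'a vec)"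
    then have i: "i < d" by simp
    have "(A' *\<^sub>v v) $ i = (\<Sum>j<m. A' $$ (i, j) * v $ j)"
      using i \<open>\<not> m \<le> d\<close> by (intro index_mult_mat_vec_sum[OF A' v(1)]) simp
    also have "\<dots> = (A *\<^sub>v v) $ i"
      using i \<open>\<not> m \<le> d\<close> by (auto simp: index_mult_mat_vec_sum[OF A v(1)] A'_def intro!: sum.cong)
    finally show "(A *\<^sub>v v) $ i = 0\<^sub>v d $ i"
      using v i \<open>\<not> m \<le> d\<close> by simp
  qed (use A in simp)
  with inj A v show False unfolding inj_mat_def by auto
qed

lemma mat_of_cols_snoc_mult_vec:
  fixes vs :: "'a :: comm_semiring_0 vec list"
  assumes vs: "set vs \<subseteq> carrier_vec d" and w: "w \<in> carrier_vec d"
    and x: "x \<in> carrier_vec (Suc (length vs))"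
  shows "mat_of_cols d (vs @ [w]) *\<^sub>v x =
    mat_of_cols d vs *\<^sub>v vec (length vs) (\<lambda>i. x $ i) + x $ length vs \<cdot>\<^sub>v w"
proof (rule eq_vecI)
  let ?m = "length vs"
  fix i assume "i < dim_vec (mat_of_cols d vs *\<^sub>v vec ?m (\<lambda>i. x $ i) + x $ ?m \<cdot>\<^sub>v w)"
  then have i: "i < d" using w by simp
  have "(mat_of_cols d (vs @ [w]) *\<^sub>v x) $ i = (\<Sum>j<Suc ?m. mat_of_cols d (vs @ [w]) $$ (i, j) * x $ j)"
    using i x by (intro index_mult_mat_vec_sum) auto
  also have "\<dots> = (\<Sum>j<?m. mat_of_cols d vs $$ (i, j) * vec ?m (\<lambda>i. x $ i) $ j) + x $ ?m * w $ i"
    using i by (auto simp: mat_of_cols_index nth_append mult.commute intro!: sum.cong)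
  also have "(\<Sum>j<?m. mat_of_cols d vs $$ (i, j) * vec ?m (\<lambda>i. x $ i) $ j) =
      (mat_of_cols d vs *\<^sub>v vec ?m (\<lambda>i. x $ i)) $ i"
    using i by (intro index_mult_mat_vec_sum[symmetric]) auto
  finally show "(mat_of_cols d (vs @ [w]) *\<^sub>v x) $ i =
      (mat_of_cols d vs *\<^sub>v vec ?m (\<lambda>i. x $ i) + x $ ?m \<cdot>\<^sub>v w) $ i"
    using i w by simp
qed (use w in auto)

lemma inj_mat_snoc:
  fixes vs :: "'a :: field vec list"
  assumes vs: "set vs \<subseteq> carrier_vec d" and w: "w \<in> carrier_vec d"
    and inj: "inj_mat (mat_of_cols d vs)" and w_notin: "w \<notin> mat_range (mat_of_cols d vs)"
  shows "inj_mat (mat_of_cols d (vs @ [w]))"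
  unfolding inj_mat_def
proof (intro ballI impI)
  let ?m = "length vs" and ?M = "mat_of_cols d vs"
  fix x :: "'a vec" assume "x \<in> carrier_vec (dim_col (mat_of_cols d (vs @ [w])))"
  then have x: "x \<in> carrier_vec (Suc ?m)" by simp
  define y where "y = vec ?m (\<lambda>i. x $ i)"
  assume "mat_of_cols d (vs @ [w]) *\<^sub>v x = 0\<^sub>v (dim_row (mat_of_cols d (vs @ [w])))"
  then have eq: "?M *\<^sub>v y + x $ ?m \<cdot>\<^sub>v w = 0\<^sub>v d"
    using mat_of_cols_snoc_mult_vec[OF vs w x] by (simp add: y_def)
  have comp: "(?M *\<^sub>v y) $ i + x $ ?m * w $ i = 0" if "i < d" for i
    using arg_cong[OF eq, of "\<lambda>v. v $ i"] that w by (simp del: index_mult_mat_vec)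
  have last: "x $ ?m = 0"
  proof (rule ccontr)
    assume nz: "x $ ?m \<noteq> 0"
    have "w = ?M *\<^sub>v ((- 1 / x $ ?m) \<cdot>\<^sub>v y)"
    proof (rule eq_vecI)
      fix i assume "i < dim_vec (?M *\<^sub>v ((- 1 / x $ ?m) \<cdot>\<^sub>v y))"
      then have i: "i < d" by simp
      have "w $ i = - (?M *\<^sub>v y) $ i / x $ ?m"
        using comp[OF i] nz by (simp add: field_simps minus_equation_iff[of "(?M *\<^sub>v y) $ i"] add_eq_0_iff2)
      also have "\<dots> = (?M *\<^sub>v ((- 1 / x $ ?m) \<cdot>\<^sub>v y)) $ i"
        using i by (simp add: mult_mat_vec[of _ d ?m] y_def del: index_mult_mat_vec)
      finally show "w $ i = (?M *\<^sub>v ((- 1 / x $ ?m) \<cdot>\<^sub>v y)) $ i" .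
    qed (use w in simp)
    then have "w \<in> mat_range ?M"
      unfolding mat_range_def by (rule image_eqI) (simp add: y_def)
    with w_notin show False ..
  qed
  then have "?M *\<^sub>v y = 0\<^sub>v d"
    using comp by (intro eq_vecI) auto
  with inj have y0: "y = 0\<^sub>v ?m"
    unfolding inj_mat_def by (simp add: y_def)
  have "x $ i = 0" if "i < ?m" for i
    using arg_cong[OF y0, of "\<lambda>v. v $ i"] that by (simp add: y_def)
  with last show "x = 0\<^sub>v (dim_col (mat_of_cols d (vs @ [w])))"
    using x by (intro eq_vecI) (auto simp: less_Suc_eq)
qed

lemma mat_range_mat_of_cols_subset:
  assumes W: "vec_subspace d W" and vs: "set vs \<subseteq> W"
  shows "mat_range (mat_of_cols d vs) \<subseteq> W"
  using vs
proof (induction vs rule: rev_induct)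
  case Nil
  have "mat_of_cols d [] *\<^sub>v x = 0\<^sub>v d" if "x \<in> carrier_vec 0" for x :: "'a vec"
    using that by (intro eq_vecI) (auto simp: scalar_prod_def)
  with W show ?case
    by (auto simp: mat_range_def vec_subspace_def)
next
  case (snoc w vs)
  have vs: "set vs \<subseteq> carrier_vec d" and w: "w \<in> carrier_vec d"
    using snoc.prems W by (auto simp: vec_subspace_def)
  show ?case
  proof
    fix u assume "u \<in> mat_range (mat_of_cols d (vs @ [w]))"
    then obtain x where x: "x \<in> carrier_vec (Suc (length vs))" and u: "u = mat_of_cols d (vs @ [w]) *\<^sub>v x"
      by (auto simp: mat_range_def)
    have "mat_of_cols d vs *\<^sub>v vec (length vs) (\<lambda>i. x $ i) \<in> W"
      using snoc by (auto simp: mat_range_def)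
    moreover have "x $ length vs \<cdot>\<^sub>v w \<in> W"
      using W snoc.prems by (auto simp: vec_subspace_def)
    ultimately show "u \<in> W"
      using W unfolding u mat_of_cols_snoc_mult_vec[OF vs w x] by (simp add: vec_subspace_def)
  qed
qed

lemma extend_to_basis:
  fixes vs :: "'a :: field vec list"
  assumes W: "vec_subspace d W" and vs: "set vs \<subseteq> W" and inj: "inj_mat (mat_of_cols d vs)"
  obtains ws where "set ws \<subseteq> W" "inj_mat (mat_of_cols d (vs @ ws))" "mat_range (mat_of_cols d (vs @ ws)) = W"
  using vs inj
proof (induction "d - length vs" arbitrary: vs rule: less_induct)
  case less
  show ?case
  proof (cases "mat_range (mat_of_cols d vs) = W")
    case True
    then show ?thesis
      using less.prems by (intro less.prems(1)[of "[]"]) auto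
  next
    case False
    with mat_range_mat_of_cols_subset[OF W less.prems(2)]
    obtain w where w: "w \<in> W" "w \<notin> mat_range (mat_of_cols d vs)"
      by auto
    have carrier: "set vs \<subseteq> carrier_vec d" "w \<in> carrier_vec d"
      using W less.prems(2) w(1) by (auto simp: vec_subspace_def)
    have inj': "inj_mat (mat_of_cols d (vs @ [w]))"
      by (rule inj_mat_snoc[OF carrier less.prems(3) w(2)])
    then have "length (vs @ [w]) \<le> d"
      by (rule inj_mat_dim_le[OF mat_of_cols_carrier(1)])
    then have "d - length (vs @ [w]) < d - length vs"
      by simp
    from less.hyps[OF this _ _ inj'] show ?thesis
      using less.prems(1)[of "w # _"] less.prems(2) w(1) by auto
  qed
qed

lemma subspace_basis_exists:
  fixes W :: "'a :: field vec set"
  assumes "vec_subspace d W"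
  obtains m B where "B \<in> carrier_mat d m" "inj_mat B" "mat_range B = W"
proof -
  have "inj_mat (mat_of_cols d ([] :: 'a vec list))"
    by (auto simp: inj_mat_def intro!: eq_vecI)
  then obtain ws where "inj_mat (mat_of_cols d ws)" "mat_range (mat_of_cols d ws) = W"
    using extend_to_basis[OF assms, of "[]"] by auto
  then show ?thesis
    by (intro that[OF mat_of_cols_carrier(1)])
qed

lemma inj_mat_proper_range_dim_less:
  fixes B :: "'a :: field mat"
  assumes B: "B \<in> carrier_mat d m" and inj: "inj_mat B" and proper: "mat_range B \<noteq> carrier_vec d"
  shows "m < d"
proof -
  have B_cols: "mat_of_cols d (cols B) = B"
    using B mat_of_cols_cols[of B] by simp
  obtain w where w: "w \<in> carrier_vec d" "w \<notin> mat_range B"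
    using proper mat_range_subset_carrier[OF B] by auto
  have "inj_mat (mat_of_cols d (cols B @ [w]))"
    using B w inj B_cols by (intro inj_mat_snoc) (auto simp: cols_def)
  from inj_mat_dim_le[OF mat_of_cols_carrier(1) this] show "m < d"
    using B by simp
qed

lemma inj_mat_left_inverse:
  fixes B :: "'a :: field mat"
  assumes B: "B \<in> carrier_mat d m" and inj: "inj_mat B"
  obtains L where "L \<in> carrier_mat m d" "L * B = 1\<^sub>m m"
proof -
  \<comment> \<open>Extend the columns of \<open>B\<close> to a basis \<open>S\<close> of the whole space; the first \<open>m\<close> rows of \<open>S\<^sup>-\<^sup>1\<close> form \<open>L\<close>.\<close>
  have W: "vec_subspace d (carrier_vec d :: 'a vec set)"
    by (auto simp: vec_subspace_def)
  have B_cols: "mat_of_cols d (cols B) = B"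
    using B mat_of_cols_cols[of B] by simp
  have "set (cols B) \<subseteq> carrier_vec d"
    using B by (auto simp: cols_def)
  then obtain ws where ws: "inj_mat (mat_of_cols d (cols B @ ws))"
    "mat_range (mat_of_cols d (cols B @ ws)) = carrier_vec d"
    using extend_to_basis[OF W] B_cols inj by metis
  define n where "n = length (cols B @ ws)"
  define S where "S = mat_of_cols d (cols B @ ws)"
  have S: "S \<in> carrier_mat d n"
    unfolding S_def n_def by (rule mat_of_cols_carrier)
  have "unit_vec d i \<in> mat_range S" for i
    using ws(2) by (simp add: S_def)
  then have "\<exists>x \<in> carrier_vec n. S *\<^sub>v x = unit_vec d i" for i
    using S unfolding mat_range_def by (metis carrier_matD(2) imageE)
  then obtain x where x: "\<And>i. x i \<in> carrier_vec n" "\<And>i. S *\<^sub>v x i = unit_vec d i"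
    by metis
  define X where "X = mat n d (\<lambda>(k, i). x i $ k)"
  have X: "X \<in> carrier_mat n d"
    by (simp add: X_def)
  have col_X: "col X i = x i" if "i < d" for i
    using x(1)[of i] that by (auto simp: X_def intro!: eq_vecI)
  have SX: "S * X = 1\<^sub>m d"
    by (rule mat_col_eqI) (use S X col_X x(2) in auto)
  have "inj_mat X"
    unfolding inj_mat_def
  proof (intro ballI impI)
    fix v assume v: "v \<in> carrier_vec (dim_col X)" and "X *\<^sub>v v = 0\<^sub>v (dim_row X)"
    then have "S *\<^sub>v (X *\<^sub>v v) = 0\<^sub>v d"
      using S X by simp
    then show "v = 0\<^sub>v (dim_col X)"
      using S X v by (simp flip: assoc_mult_mat_vec add: SX)
  qed
  with inj_mat_dim_le[OF X] inj_mat_dim_le[OF S] ws(1) have "n = d"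
    by (simp add: S_def)
  with mat_mult_left_right_inverse[of S d X] S X SX have XS: "X * S = 1\<^sub>m n"
    by simp
  define L where "L = mat m d (\<lambda>(i, j). X $$ (i, j))"
  have "L * B = 1\<^sub>m m"
  proof (rule eq_matI)
    fix i j assume "i < dim_row (1\<^sub>m m :: 'a mat)" "j < dim_col (1\<^sub>m m :: 'a mat)"
    then have ij: "i < m" "j < m" by auto
    then have mn: "m \<le> n"
      using B by (simp add: n_def)
    have "(L * B) $$ (i, j) = (\<Sum>l\<in>{0..<d}. X $$ (i, l) * S $$ (l, j))"
      using B ij mn by (auto simp: L_def S_def scalar_prod_def mat_of_cols_index nth_append intro!: sum.cong)
    also have "\<dots> = (X * S) $$ (i, j)"
      using S X ij mn by (simp add: scalar_prod_def)
    finally show "(L * B) $$ (i, j) = 1\<^sub>m m $$ (i, j)"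
      using XS ij mn by simp
  qed (use B in \<open>auto simp: L_def\<close>)
  then show ?thesis
    by (intro that) (simp_all add: L_def)
qed

lemma left_inverse_fixes_range:
  fixes B :: "'a :: comm_semiring_1 mat"
  assumes "B \<in> carrier_mat d m" "L \<in> carrier_mat m d" "L * B = 1\<^sub>m m" "w \<in> mat_range B"
  shows "B *\<^sub>v (L *\<^sub>v w) = w"
  using assms by (auto simp: mat_range_def simp flip: assoc_mult_mat_vec[of L m d B m])

section \<open>Representations and Fourier transforms\<close>

definition mat_sum :: "nat \<Rightarrow> nat \<Rightarrow> 'x set \<Rightarrow> ('x \<Rightarrow> 'a :: comm_monoid_add mat) \<Rightarrow> 'a mat" where
  "mat_sum r c A f = mat r c (\<lambda>(i, j). \<Sum>x\<in>A. f x $$ (i, j))"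

lemma mat_sum_carrier [simp]: "mat_sum r c A f \<in> carrier_mat r c"
  and dim_mat_sum [simp]: "dim_row (mat_sum r c A f) = r" "dim_col (mat_sum r c A f) = c"
  and index_mat_sum [simp]: "i < r \<Longrightarrow> j < c \<Longrightarrow> mat_sum r c A f $$ (i, j) = (\<Sum>x\<in>A. f x $$ (i, j))"
  by (simp_all add: mat_sum_def)

lemma mat_sum_cong: "(\<And>x. x \<in> A \<Longrightarrow> f x = g x) \<Longrightarrow> mat_sum r c A f = mat_sum r c A g"
  unfolding mat_sum_def by (intro eq_matI) auto

lemma mat_sum_reindex:
  assumes "bij_betw \<phi> A A"
  shows "mat_sum r c A (\<lambda>x. f (\<phi> x)) = mat_sum r c A f"
  using sum.reindex_bij_betw[OF assms] by (intro eq_matI) auto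

lemma mat_sum_const:
  "finite A \<Longrightarrow> M \<in> carrier_mat r c \<Longrightarrow> mat_sum r c A (\<lambda>x. M) = of_nat (card A) \<cdot>\<^sub>m (M :: 'a :: semiring_1 mat)"
  by (intro eq_matI) auto

lemma mat_sum_mult_right:
  fixes f :: "'x \<Rightarrow> 'a :: comm_semiring_0 mat"
  assumes "\<And>x. x \<in> A \<Longrightarrow> f x \<in> carrier_mat r k" and B: "B \<in> carrier_mat k c"
  shows "mat_sum r k A f * B = mat_sum r c A (\<lambda>x. f x * B)"
proof (rule eq_matI)
  fix i j assume "i < dim_row (mat_sum r c A (\<lambda>x. f x * B))" "j < dim_col (mat_sum r c A (\<lambda>x. f x * B))"
  then have ij: "i < r" "j < c" by auto
  have "(mat_sum r k A f * B) $$ (i, j) = (\<Sum>l<k. (\<Sum>x\<in>A. f x $$ (i, l)) * B $$ (l, j))"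
    using ij B by (simp add: scalar_prod_def lessThan_atLeast0)
  also have "\<dots> = (\<Sum>x\<in>A. \<Sum>l<k. f x $$ (i, l) * B $$ (l, j))"
    by (simp add: sum_distrib_right sum.swap[of _ A])
  also have "\<dots> = mat_sum r c A (\<lambda>x. f x * B) $$ (i, j)"
    using ij B assms(1)[THEN carrier_matD(1)] assms(1)[THEN carrier_matD(2)]
    by (auto simp: scalar_prod_def lessThan_atLeast0 intro!: sum.cong)
  finally show "(mat_sum r k A f * B) $$ (i, j) = mat_sum r c A (\<lambda>x. f x * B) $$ (i, j)" .
qed (use B in auto)

lemma mat_sum_mult_left:
  fixes f :: "'x \<Rightarrow> 'a :: comm_semiring_0 mat"
  assumes "\<And>x. x \<in> A \<Longrightarrow> f x \<in> carrier_mat k c" and B: "B \<in> carrier_mat r k"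
  shows "B * mat_sum k c A f = mat_sum r c A (\<lambda>x. B * f x)"
proof (rule eq_matI)
  fix i j assume "i < dim_row (mat_sum r c A (\<lambda>x. B * f x))" "j < dim_col (mat_sum r c A (\<lambda>x. B * f x))"
  then have ij: "i < r" "j < c" by auto
  have "(B * mat_sum k c A f) $$ (i, j) = (\<Sum>l<k. B $$ (i, l) * (\<Sum>x\<in>A. f x $$ (l, j)))"
    using ij B by (simp add: scalar_prod_def lessThan_atLeast0)
  also have "\<dots> = (\<Sum>x\<in>A. \<Sum>l<k. B $$ (i, l) * f x $$ (l, j))"
    by (simp add: sum_distrib_left sum.swap[of _ A])
  also have "\<dots> = mat_sum r c A (\<lambda>x. B * f x) $$ (i, j)"
    using ij B assms(1)[THEN carrier_matD(1)] assms(1)[THEN carrier_matD(2)]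
    by (auto simp: scalar_prod_def lessThan_atLeast0 intro!: sum.cong)
  finally show "(B * mat_sum k c A f) $$ (i, j) = mat_sum r c A (\<lambda>x. B * f x) $$ (i, j)" .
qed (use B in auto)

lemma representation_carrier: "representation G d \<rho> \<Longrightarrow> g \<in> carrier G \<Longrightarrow> \<rho> g \<in> carrier_mat d d"
  and representation_one: "representation G d \<rho> \<Longrightarrow> \<rho> \<one>\<^bsub>G\<^esub> = 1\<^sub>m d"
  and representation_mult: "representation G d \<rho> \<Longrightarrow> g \<in> carrier G \<Longrightarrow> h \<in> carrier G \<Longrightarrow>
    \<rho> (g \<otimes>\<^bsub>G\<^esub> h) = \<rho> g * \<rho> h"
  by (simp_all add: representation_def)

lemma representation_dim:
  assumes "representation G d \<rho>" "g \<in> carrier G"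
  shows "dim_row (\<rho> g) = d" "dim_col (\<rho> g) = d"
  using representation_carrier[OF assms] by auto

lemma invariant_subspace_iff:
  "invariant_subspace G d \<rho> W \<longleftrightarrow> vec_subspace d W \<and> (\<forall>g \<in> carrier G. \<forall>v \<in> W. \<rho> g *\<^sub>v v \<in> W)"
  by (auto simp: invariant_subspace_def vec_subspace_def)

definition fixed_vecs :: "('a, 'b) monoid_scheme \<Rightarrow> nat \<Rightarrow> ('a \<Rightarrow> complex mat) \<Rightarrow> complex vec set" where
  "fixed_vecs G d \<rho> = {v \<in> carrier_vec d. \<forall>g \<in> carrier G. \<rho> g *\<^sub>v v = v}"

lemma zero_in_fixed_vecs:
  assumes "representation G d \<rho>"
  shows "0\<^sub>v d \<in> fixed_vecs G d \<rho>"
  using representation_carrier[OF assms] by (simp add: fixed_vecs_def)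

lemma fixed_vecs_invariant:
  assumes \<rho>: "representation G d \<rho>"
  shows "invariant_subspace G d \<rho> (fixed_vecs G d \<rho>)"
  unfolding invariant_subspace_def
proof (intro conjI ballI allI)
  note carrier = representation_carrier[OF \<rho>]
  show "fixed_vecs G d \<rho> \<subseteq> carrier_vec d" "0\<^sub>v d \<in> fixed_vecs G d \<rho>"
    using carrier by (auto simp: fixed_vecs_def)
  fix v assume v: "v \<in> fixed_vecs G d \<rho>"
  then show "\<rho> g *\<^sub>v v \<in> fixed_vecs G d \<rho>" if "g \<in> carrier G" for g
    using that by (simp add: fixed_vecs_def)
  show "c \<cdot>\<^sub>v v \<in> fixed_vecs G d \<rho>" for c
    using v by (simp add: fixed_vecs_def mult_mat_vec[OF carrier])
  show "v + w \<in> fixed_vecs G d \<rho>" if "w \<in> fixed_vecs G d \<rho>" for w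
    using v that by (simp add: fixed_vecs_def mult_add_distrib_mat_vec[OF carrier])
qed

lemma fixed_vecs_eq_carrier_imp_trivial:
  assumes "representation G d \<rho>" "fixed_vecs G d \<rho> = carrier_vec d"
  shows "trivial_rep G d \<rho>"
  unfolding trivial_rep_def
proof
  fix g assume g: "g \<in> carrier G"
  have "unit_vec d j \<in> fixed_vecs G d \<rho>" for j
    using assms(2) by simp
  with g show "\<rho> g = 1\<^sub>m d"
    by (intro mat_eq_on_unit_vecs[OF representation_carrier[OF assms(1) g] one_carrier_mat])
      (simp add: fixed_vecs_def)
qed

lemma irreducible_nontrivial_fixed_vecs:
  assumes "irreducible_rep G d \<rho>" "\<not> trivial_rep G d \<rho>"
  shows "fixed_vecs G d \<rho> = {0\<^sub>v d}"
proof -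
  have \<rho>: "representation G d \<rho>"
    using assms(1) by (simp add: irreducible_rep_def)
  have "fixed_vecs G d \<rho> \<noteq> carrier_vec d"
    using fixed_vecs_eq_carrier_imp_trivial[OF \<rho>] assms(2) by blast
  with assms(1) fixed_vecs_invariant[OF \<rho>] show ?thesis
    unfolding irreducible_rep_def by blast
qed

lemma mat_range_subset_fixed_vecs:
  assumes "representation G d \<rho>" "A \<in> carrier_mat d m" "\<And>g. g \<in> carrier G \<Longrightarrow> \<rho> g * A = A"
  shows "mat_range A \<subseteq> fixed_vecs G d \<rho>"
proof
  fix v assume "v \<in> mat_range A"
  then obtain x where x: "x \<in> carrier_vec m" and v: "v = A *\<^sub>v x"
    using assms(2) by (auto simp: mat_range_def)
  have "\<rho> g *\<^sub>v (A *\<^sub>v x) = A *\<^sub>v x" if "g \<in> carrier G" for g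
    using assms(2) assms(3)[OF that] representation_carrier[OF assms(1) that] x
    by (simp flip: assoc_mult_mat_vec[of _ d d A m])
  then show "v \<in> fixed_vecs G d \<rho>"
    using assms(2) x by (simp add: v fixed_vecs_def)
qed

definition intertwining :: "('a, 'b) monoid_scheme \<Rightarrow> ('a \<Rightarrow> complex mat) \<Rightarrow> ('a \<Rightarrow> complex mat) \<Rightarrow> complex mat \<Rightarrow> bool" where
  "intertwining G \<sigma> \<tau> B \<longleftrightarrow> (\<forall>g \<in> carrier G. \<sigma> g * B = B * \<tau> g)"

lemma intertwining_fixed_vecs:
  assumes \<sigma>: "representation G d \<sigma>" and \<tau>: "representation G m \<tau>"
    and B: "B \<in> carrier_mat d m" "intertwining G \<sigma> \<tau> B" and y: "y \<in> fixed_vecs G m \<tau>"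
  shows "B *\<^sub>v y \<in> fixed_vecs G d \<sigma>"
proof -
  have "\<sigma> g *\<^sub>v (B *\<^sub>v y) = B *\<^sub>v y" if g: "g \<in> carrier G" for g
  proof -
    have "\<sigma> g *\<^sub>v (B *\<^sub>v y) = (B * \<tau> g) *\<^sub>v y"
      using B g y representation_carrier[OF \<sigma> g]
      by (simp add: intertwining_def fixed_vecs_def flip: assoc_mult_mat_vec[of _ d d B m])
    also have "\<dots> = B *\<^sub>v y"
      using B y g representation_carrier[OF \<tau> g] by (simp add: fixed_vecs_def)
    finally show ?thesis .
  qed
  with B y show ?thesis
    by (simp add: fixed_vecs_def)
qed

definition fourier :: "('a, 'b) monoid_scheme \<Rightarrow> nat \<Rightarrow> ('a \<Rightarrow> complex mat) \<Rightarrow> ('a \<Rightarrow> complex) \<Rightarrow> complex mat" where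
  "fourier G d \<rho> f = mat_sum d d (carrier G) (\<lambda>x. f x \<cdot>\<^sub>m \<rho> x)"

lemma fourier_carrier [simp]: "fourier G d \<rho> f \<in> carrier_mat d d"
  and dim_fourier [simp]: "dim_row (fourier G d \<rho> f) = d" "dim_col (fourier G d \<rho> f) = d"
  by (simp_all add: fourier_def)

lemma fourier_cong: "(\<And>x. x \<in> carrier G \<Longrightarrow> f x = f' x) \<Longrightarrow> fourier G d \<rho> f = fourier G d \<rho> f'"
  unfolding fourier_def by (auto intro: mat_sum_cong)

lemma fourier_index:
  assumes "representation G d \<rho>" "i < d" "j < d"
  shows "fourier G d \<rho> f $$ (i, j) = (\<Sum>x\<in>carrier G. f x * \<rho> x $$ (i, j))"
  using assms by (auto simp: fourier_def representation_dim intro!: sum.cong)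

lemma fourier_lincomb:
  assumes "representation G d \<rho>"
  shows "fourier G d \<rho> (\<lambda>x. a * f x + b * h x) = a \<cdot>\<^sub>m fourier G d \<rho> f + b \<cdot>\<^sub>m fourier G d \<rho> h"
  by (intro eq_matI) (simp_all add: fourier_index[OF assms] distrib_right sum.distrib sum_distrib_left mult.assoc)

lemma fourier_indicator_one:
  assumes "group G" "finite (carrier G)" "representation G d \<rho>"
  shows "fourier G d \<rho> (\<lambda>x. of_bool (x = \<one>\<^bsub>G\<^esub>)) = 1\<^sub>m d"
proof -
  have "carrier G \<inter> {x. x = \<one>\<^bsub>G\<^esub>} = {\<one>\<^bsub>G\<^esub>}"
    using monoid.one_closed[OF group.is_monoid[OF assms(1)]] by auto
  then show ?thesis
    using assms by (intro eq_matI) (simp_all add: fourier_index representation_one sum_of_bool_mult_eq)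
qed

lemma representation_mult_fourier:
  assumes G: "group G" and \<rho>: "representation G d \<rho>" and g: "g \<in> carrier G"
  shows "\<rho> g * fourier G d \<rho> f = fourier G d \<rho> (\<lambda>x. f (inv\<^bsub>G\<^esub> g \<otimes>\<^bsub>G\<^esub> x))"
proof -
  interpret group G by (fact G)
  have bij: "bij_betw (\<lambda>x. inv\<^bsub>G\<^esub> g \<otimes>\<^bsub>G\<^esub> x) (carrier G) (carrier G)"
    by (rule bij_betwI[where g = "\<lambda>x. g \<otimes>\<^bsub>G\<^esub> x"]) (use g in \<open>auto simp flip: m_assoc\<close>)
  have "\<rho> g * fourier G d \<rho> f = mat_sum d d (carrier G) (\<lambda>x. \<rho> g * (f x \<cdot>\<^sub>m \<rho> x))"
    unfolding fourier_def using representation_carrier[OF \<rho>] g by (intro mat_sum_mult_left) auto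
  also have "\<dots> = mat_sum d d (carrier G) (\<lambda>x. f x \<cdot>\<^sub>m \<rho> (g \<otimes>\<^bsub>G\<^esub> x))"
    using g by (intro mat_sum_cong) (simp add: representation_mult[OF \<rho>]
        mult_smult_distrib[OF representation_carrier[OF \<rho>] representation_carrier[OF \<rho>]])
  also have "\<dots> = mat_sum d d (carrier G)
      (\<lambda>x. f (inv\<^bsub>G\<^esub> g \<otimes>\<^bsub>G\<^esub> x) \<cdot>\<^sub>m \<rho> (g \<otimes>\<^bsub>G\<^esub> (inv\<^bsub>G\<^esub> g \<otimes>\<^bsub>G\<^esub> x)))"
    by (rule mat_sum_reindex[OF bij, symmetric])
  also have "\<dots> = fourier G d \<rho> (\<lambda>x. f (inv\<^bsub>G\<^esub> g \<otimes>\<^bsub>G\<^esub> x))"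
    unfolding fourier_def using g by (intro mat_sum_cong) (simp flip: m_assoc)
  finally show ?thesis .
qed

section \<open>Products of mixing factors\<close>

definition valid_mixing :: "('a, 'b) monoid_scheme \<Rightarrow> ('a \<times> real) list \<Rightarrow> bool" where
  "valid_mixing G xs \<longleftrightarrow> (\<forall>(g, p) \<in> set xs. g \<in> carrier G \<and> 0 \<le> p \<and> p \<le> 1)"

lemma valid_mixing_simps [simp]:
  "valid_mixing G []"
  "valid_mixing G ((g, p) # xs) \<longleftrightarrow> g \<in> carrier G \<and> 0 \<le> p \<and> p \<le> 1 \<and> valid_mixing G xs"
  "valid_mixing G (xs @ ys) \<longleftrightarrow> valid_mixing G xs \<and> valid_mixing G ys"
  by (auto simp: valid_mixing_def)

lemma mixable_group_iff:
  "mixable_group G \<longleftrightarrow> (\<exists>xs. valid_mixing G xs \<and> mix_pmf G xs = pmf_of_set (carrier G))"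
  by (simp add: mixable_group_def valid_mixing_def)

definition mix_factor :: "nat \<Rightarrow> ('a \<Rightarrow> complex mat) \<Rightarrow> 'a \<Rightarrow> real \<Rightarrow> complex mat" where
  "mix_factor d \<rho> g p = complex_of_real (1 - p) \<cdot>\<^sub>m 1\<^sub>m d + complex_of_real p \<cdot>\<^sub>m \<rho> g"

definition mix_mat :: "nat \<Rightarrow> ('a \<Rightarrow> complex mat) \<Rightarrow> ('a \<times> real) list \<Rightarrow> complex mat" where
  "mix_mat d \<rho> xs = foldr (\<lambda>(g, p) M. mix_factor d \<rho> g p * M) xs (1\<^sub>m d)"

lemma mix_mat_Nil [simp]: "mix_mat d \<rho> [] = 1\<^sub>m d"
  and mix_mat_Cons [simp]: "mix_mat d \<rho> ((g, p) # xs) = mix_factor d \<rho> g p * mix_mat d \<rho> xs"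
  by (simp_all add: mix_mat_def)

lemma mixable_rep_iff:
  "mixable_rep G d \<rho> \<longleftrightarrow> (\<exists>xs. valid_mixing G xs \<and> mix_mat d \<rho> xs = 0\<^sub>m d d)"
  by (simp add: mixable_rep_def valid_mixing_def mix_mat_def mix_factor_def)

lemma mix_factor_carrier [simp]: "\<rho> g \<in> carrier_mat d d \<Longrightarrow> mix_factor d \<rho> g p \<in> carrier_mat d d"
  by (simp add: mix_factor_def)

lemma mix_mat_carrier:
  assumes "representation G d \<rho>" "valid_mixing G xs"
  shows "mix_mat d \<rho> xs \<in> carrier_mat d d"
  using assms(2)
  by (induction xs) (auto intro!: mult_carrier_mat mix_factor_carrier representation_carrier[OF assms(1)])

lemma mix_mat_append:
  assumes "representation G d \<rho>" "valid_mixing G xs" "valid_mixing G ys"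
  shows "mix_mat d \<rho> (xs @ ys) = mix_mat d \<rho> xs * mix_mat d \<rho> ys"
  using assms(2)
proof (induction xs)
  case (Cons a xs)
  then show ?case
    using assms mix_mat_carrier[OF assms(1)] representation_carrier[OF assms(1)]
    by (cases a) (auto simp: assoc_mult_mat[of _ d d _ d _ d])
qed (use mix_mat_carrier[OF assms(1,3)] in simp)

lemma mix_factor_mult:
  assumes "\<rho> g \<in> carrier_mat d d" "M \<in> carrier_mat d c"
  shows "mix_factor d \<rho> g p * M = complex_of_real (1 - p) \<cdot>\<^sub>m M + complex_of_real p \<cdot>\<^sub>m (\<rho> g * M)"
  using assms by (simp add: mix_factor_def add_mult_distrib_mat[of _ d d _ M c] mult_smult_assoc_mat[of _ d d M c])

lemma mix_factor_fixes:
  assumes "\<rho> g \<in> carrier_mat d d" "v \<in> carrier_vec d" "\<rho> g *\<^sub>v v = v"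
  shows "mix_factor d \<rho> g p *\<^sub>v v = v"
proof -
  have "mix_factor d \<rho> g p *\<^sub>v v = complex_of_real (1 - p) \<cdot>\<^sub>v v + complex_of_real p \<cdot>\<^sub>v v"
    using assms by (simp add: mix_factor_def add_mult_distrib_mat_vec[of _ d d] smult_mat_mult_vec[of _ d d])
  also have "\<dots> = v"
    by (simp flip: add_smult_distrib_vec)
  finally show ?thesis .
qed

lemma mix_factor_intertwine:
  assumes B: "B \<in> carrier_mat k m" and \<sigma>: "\<sigma> g \<in> carrier_mat k k" and \<tau>: "\<tau> g \<in> carrier_mat m m"
    and comm: "\<sigma> g * B = B * \<tau> g"
  shows "mix_factor k \<sigma> g p * B = B * mix_factor m \<tau> g p"
proof -
  let ?a = "complex_of_real (1 - p)" and ?b = "complex_of_real p"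
  have "mix_factor k \<sigma> g p * B = ?a \<cdot>\<^sub>m B + ?b \<cdot>\<^sub>m (\<sigma> g * B)"
    using \<sigma> B by (rule mix_factor_mult[where \<rho> = \<sigma>])
  also have "\<dots> = ?a \<cdot>\<^sub>m B + ?b \<cdot>\<^sub>m (B * \<tau> g)"
    by (simp add: comm)
  also have "\<dots> = B * (?a \<cdot>\<^sub>m 1\<^sub>m m) + B * (?b \<cdot>\<^sub>m \<tau> g)"
    using B \<tau> by (simp add: mult_smult_distrib[OF B one_carrier_mat] mult_smult_distrib[OF B \<tau>])
  also have "\<dots> = B * mix_factor m \<tau> g p"
    unfolding mix_factor_def using B \<tau> by (intro mult_add_distrib_mat[symmetric]) auto
  finally show ?thesis .
qed

lemma mix_mat_fixes:
  assumes "representation G d \<rho>" "valid_mixing G xs" "v \<in> fixed_vecs G d \<rho>"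
  shows "mix_mat d \<rho> xs *\<^sub>v v = v"
  using assms(2)
proof (induction xs)
  case (Cons a xs)
  obtain g p where a: "a = (g, p)"
    by fastforce
  have g: "g \<in> carrier G" and "valid_mixing G xs"
    using Cons.prems a by auto
  with Cons.IH assms show ?case
    using representation_carrier[OF assms(1) g] mix_mat_carrier[OF assms(1)]
    by (auto simp: a fixed_vecs_def mix_factor_fixes assoc_mult_mat_vec[of _ d d _ d])
qed (use assms in \<open>simp add: fixed_vecs_def\<close>)

lemma mix_mat_intertwine:
  assumes \<sigma>: "representation G k \<sigma>" and \<tau>: "representation G m \<tau>"
    and B: "B \<in> carrier_mat k m" "intertwining G \<sigma> \<tau> B" and xs: "valid_mixing G xs"
  shows "mix_mat k \<sigma> xs * B = B * mix_mat m \<tau> xs"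
  using xs
proof (induction xs)
  case (Cons a xs)
  obtain g p where a: "a = (g, p)"
    by fastforce
  have g: "g \<in> carrier G" and xs: "valid_mixing G xs"
    using Cons.prems a by auto
  note carriers = representation_carrier[OF \<sigma> g] representation_carrier[OF \<tau> g]
    mix_mat_carrier[OF \<sigma> xs] mix_mat_carrier[OF \<tau> xs]
  have "mix_mat k \<sigma> (a # xs) * B = mix_factor k \<sigma> g p * (B * mix_mat m \<tau> xs)"
    using carriers B Cons.IH[OF xs] by (simp add: a assoc_mult_mat[of _ k k _ k _ m])
  also have "\<dots> = (mix_factor k \<sigma> g p * B) * mix_mat m \<tau> xs"
    using carriers B by (simp add: assoc_mult_mat[of _ k k _ m _ m])
  also have "\<dots> = (B * mix_factor m \<tau> g p) * mix_mat m \<tau> xs"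
    using carriers B g by (simp add: mix_factor_intertwine intertwining_def)
  finally show ?case
    using carriers B by (simp add: a assoc_mult_mat[of _ k m _ m _ m])
qed (use B in simp)

lemma set_pmf_mix_pmf:
  assumes "group G" "valid_mixing G xs"
  shows "set_pmf (mix_pmf G xs) \<subseteq> carrier G"
  using assms(2)
proof (induction xs)
  case Nil
  then show ?case
    using monoid.one_closed[OF group.is_monoid[OF assms(1)]] by simp
next
  case (Cons a xs)
  then show ?case
    using monoid.m_closed[OF group.is_monoid[OF assms(1)]] by (cases a) (auto split: if_splits)
qed

lemma pmf_left_translate:
  assumes G: "group G" and g: "g \<in> carrier G" and z: "z \<in> carrier G"
    and supp: "set_pmf \<mu> \<subseteq> carrier G"
  shows "pmf (map_pmf (\<lambda>y. g \<otimes>\<^bsub>G\<^esub> y) \<mu>) z = pmf \<mu> (inv\<^bsub>G\<^esub> g \<otimes>\<^bsub>G\<^esub> z)"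
proof -
  interpret group G by (fact G)
  have inj: "inj_on (\<lambda>y. g \<otimes>\<^bsub>G\<^esub> y) (set_pmf \<mu>)"
    using g supp by (intro inj_onI) (metis Units_eq Units_l_cancel subsetD)
  have z_eq: "z = g \<otimes>\<^bsub>G\<^esub> (inv\<^bsub>G\<^esub> g \<otimes>\<^bsub>G\<^esub> z)"
    using g z by (simp flip: m_assoc)
  show ?thesis
  proof (cases "inv\<^bsub>G\<^esub> g \<otimes>\<^bsub>G\<^esub> z \<in> set_pmf \<mu>")
    case True
    show ?thesis
      by (subst z_eq) (rule pmf_map_inj[OF inj True])
  next
    case False
    have "z \<notin> set_pmf (map_pmf (\<lambda>y. g \<otimes>\<^bsub>G\<^esub> y) \<mu>)"
    proof
      assume "z \<in> set_pmf (map_pmf (\<lambda>y. g \<otimes>\<^bsub>G\<^esub> y) \<mu>)"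
      then obtain y where "y \<in> set_pmf \<mu>" "z = g \<otimes>\<^bsub>G\<^esub> y"
        by auto
      with False g supp show False
        by (auto simp flip: m_assoc)
    qed
    with False show ?thesis
      by (simp add: set_pmf_eq)
  qed
qed

lemma pmf_mix_pmf_Cons:
  assumes G: "group G" and g: "g \<in> carrier G" and p: "0 \<le> p" "p \<le> 1" and z: "z \<in> carrier G"
    and supp: "set_pmf (mix_pmf G xs) \<subseteq> carrier G"
  shows "pmf (mix_pmf G ((g, p) # xs)) z =
    (1 - p) * pmf (mix_pmf G xs) z + p * pmf (mix_pmf G xs) (inv\<^bsub>G\<^esub> g \<otimes>\<^bsub>G\<^esub> z)"
proof -
  have "pmf (mix_pmf G ((g, p) # xs)) z =
      p * pmf (map_pmf (\<lambda>y. g \<otimes>\<^bsub>G\<^esub> y) (mix_pmf G xs)) z + (1 - p) * pmf (mix_pmf G xs) z"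
    using p by (simp add: pmf_bind[of "bernoulli_pmf p"] map_pmf_def bind_return_pmf' ac_simps)
  then show ?thesis
    using pmf_left_translate[OF G g z supp] by simp
qed

lemma mix_mat_eq_fourier:
  assumes G: "group G" and fin: "finite (carrier G)" and \<rho>: "representation G d \<rho>"
    and xs: "valid_mixing G xs"
  shows "mix_mat d \<rho> xs = fourier G d \<rho> (\<lambda>x. pmf (mix_pmf G xs) x)"
  using xs
proof (induction xs)
  case Nil
  have "fourier G d \<rho> (\<lambda>x. pmf (mix_pmf G []) x) = fourier G d \<rho> (\<lambda>x. of_bool (x = \<one>\<^bsub>G\<^esub>))"
    by (intro fourier_cong) (simp add: indicator_def)
  then show ?case
    by (simp add: fourier_indicator_one[OF G fin \<rho>])
next
  case (Cons a xs)
  obtain g p where a: "a = (g, p)"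
    by fastforce
  have g: "g \<in> carrier G" and p: "0 \<le> p" "p \<le> 1" and xs: "valid_mixing G xs"
    using Cons.prems a by auto
  let ?\<mu> = "\<lambda>x. complex_of_real (pmf (mix_pmf G xs) x)"
  have "mix_mat d \<rho> (a # xs) = mix_factor d \<rho> g p * fourier G d \<rho> ?\<mu>"
    by (simp add: a Cons.IH[OF xs])
  also have "\<dots> = complex_of_real (1 - p) \<cdot>\<^sub>m fourier G d \<rho> ?\<mu> + complex_of_real p \<cdot>\<^sub>m (\<rho> g * fourier G d \<rho> ?\<mu>)"
    using representation_carrier[OF \<rho> g] fourier_carrier by (rule mix_factor_mult[where \<rho> = \<rho>])
  also have "\<dots> = fourier G d \<rho> (\<lambda>x. complex_of_real (1 - p) * ?\<mu> x + complex_of_real p * ?\<mu> (inv\<^bsub>G\<^esub> g \<otimes>\<^bsub>G\<^esub> x))"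
    by (simp add: representation_mult_fourier[OF G \<rho> g] fourier_lincomb[OF \<rho>])
  also have "\<dots> = fourier G d \<rho> (\<lambda>x. pmf (mix_pmf G (a # xs)) x)"
    using pmf_mix_pmf_Cons[OF G g p _ set_pmf_mix_pmf[OF G xs]] by (intro fourier_cong) (simp add: a)
  finally show ?case .
qed

lemma mixable_group_imp_mixable_rep:
  assumes G: "group G" and fin: "finite (carrier G)" and mix: "mixable_group G"
    and irr: "irreducible_rep G d \<rho>" and nontriv: "\<not> trivial_rep G d \<rho>"
  shows "mixable_rep G d \<rho>"
proof -
  obtain xs where xs: "valid_mixing G xs" and uniform: "mix_pmf G xs = pmf_of_set (carrier G)"
    using mix by (auto simp: mixable_group_iff)
  have \<rho>: "representation G d \<rho>"
    using irr by (simp add: irreducible_rep_def)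
  have ne: "carrier G \<noteq> {}"
    using monoid.one_closed[OF group.is_monoid[OF G]] by blast
  define c where "c = complex_of_real (1 / card (carrier G))"
  have A: "mix_mat d \<rho> xs = fourier G d \<rho> (\<lambda>_. c)"
    unfolding mix_mat_eq_fourier[OF G fin \<rho> xs] uniform
    using fin ne by (intro fourier_cong) (simp add: c_def)
  have "\<rho> g * mix_mat d \<rho> xs = mix_mat d \<rho> xs" if "g \<in> carrier G" for g
    unfolding A by (simp add: representation_mult_fourier[OF G \<rho> that])
  then have "mat_range (mix_mat d \<rho> xs) \<subseteq> {0\<^sub>v d}"
    using mat_range_subset_fixed_vecs[OF \<rho> mix_mat_carrier[OF \<rho> xs]]
      irreducible_nontrivial_fixed_vecs[OF irr nontriv] by blast
  then have "mix_mat d \<rho> xs = 0\<^sub>m d d"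
    by (rule mat_range_zero_imp_zero[OF mix_mat_carrier[OF \<rho> xs]])
  with xs show ?thesis
    by (auto simp: mixable_rep_iff)
qed

section \<open>Complete reducibility\<close>

lemma restrict_representation:
  assumes \<sigma>: "representation G d \<sigma>" and B: "B \<in> carrier_mat d m"
    and L: "L \<in> carrier_mat m d" "L * B = 1\<^sub>m m"
    and inv: "\<And>g v. g \<in> carrier G \<Longrightarrow> v \<in> mat_range B \<Longrightarrow> \<sigma> g *\<^sub>v v \<in> mat_range B"
  shows "representation G m (\<lambda>g. L * \<sigma> g * B)" "intertwining G \<sigma> (\<lambda>g. L * \<sigma> g * B) B"
proof -
  note carrier = representation_carrier[OF \<sigma>]
  have Ls: "L * \<sigma> g \<in> carrier_mat m d" and LsB: "L * \<sigma> g * B \<in> carrier_mat m m"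
    if "g \<in> carrier G" for g
    using B L carrier[OF that] by auto
  have comm: "\<sigma> g * B = B * (L * \<sigma> g * B)" if g: "g \<in> carrier G" for g
  proof (rule mat_eq_on_unit_vecs[where d = d and m = m])
    fix j assume "j < m"
    let ?u = "B *\<^sub>v unit_vec m j"
    have u: "?u \<in> carrier_vec d"
      using B by simp
    have w: "\<sigma> g *\<^sub>v ?u \<in> mat_range B"
      using B by (intro inv[OF g]) (simp add: mat_range_def)
    have "(\<sigma> g * B) *\<^sub>v unit_vec m j = \<sigma> g *\<^sub>v ?u"
      by (rule assoc_mult_mat_vec[OF carrier[OF g] B unit_vec_carrier])
    also have "\<dots> = B *\<^sub>v (L *\<^sub>v (\<sigma> g *\<^sub>v ?u))"
      by (rule left_inverse_fixes_range[OF B L w, symmetric])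
    also have "\<dots> = (B * (L * \<sigma> g * B)) *\<^sub>v unit_vec m j"
      by (simp only: assoc_mult_mat_vec[OF B LsB[OF g] unit_vec_carrier]
          assoc_mult_mat_vec[OF Ls[OF g] B unit_vec_carrier] assoc_mult_mat_vec[OF L(1) carrier[OF g] u])
    finally show "(\<sigma> g * B) *\<^sub>v unit_vec m j = (B * (L * \<sigma> g * B)) *\<^sub>v unit_vec m j" .
  qed (use B LsB[OF g] carrier[OF g] in auto)
  then show "intertwining G \<sigma> (\<lambda>g. L * \<sigma> g * B) B"
    by (simp add: intertwining_def)
  show "representation G m (\<lambda>g. L * \<sigma> g * B)"
    unfolding representation_def
  proof (intro conjI ballI)
    show "L * \<sigma> g * B \<in> carrier_mat m m" if "g \<in> carrier G" for g
      by (rule LsB[OF that])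
    show "L * \<sigma> \<one>\<^bsub>G\<^esub> * B = 1\<^sub>m m"
      using B L by (simp add: representation_one[OF \<sigma>])
    fix g h assume g: "g \<in> carrier G" and h: "h \<in> carrier G"
    have "L * \<sigma> (g \<otimes>\<^bsub>G\<^esub> h) * B = L * \<sigma> g * \<sigma> h * B"
      using L carrier[OF g] carrier[OF h]
      by (simp add: representation_mult[OF \<sigma> g h] assoc_mult_mat[of L m d "\<sigma> g" d "\<sigma> h" d])
    also have "\<dots> = L * \<sigma> g * (\<sigma> h * B)"
      by (rule assoc_mult_mat[OF Ls[OF g] carrier[OF h] B])
    also have "\<dots> = L * \<sigma> g * (B * (L * \<sigma> h * B))"
      by (simp add: comm[OF h])
    also have "\<dots> = L * \<sigma> g * B * (L * \<sigma> h * B)"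
      by (rule assoc_mult_mat[OF Ls[OF g] B LsB[OF h], symmetric])
    finally show "L * \<sigma> (g \<otimes>\<^bsub>G\<^esub> h) * B = L * \<sigma> g * B * (L * \<sigma> h * B)" .
  qed
qed

lemma invariant_subspace_subrep:
  assumes \<sigma>: "representation G d \<sigma>" and W: "invariant_subspace G d \<sigma> W"
  obtains m B L \<tau> where "B \<in> carrier_mat d m" "L \<in> carrier_mat m d" "L * B = 1\<^sub>m m"
    "mat_range B = W" "representation G m \<tau>" "intertwining G \<sigma> \<tau> B"
    "W \<noteq> carrier_vec d \<Longrightarrow> m < d"
proof -
  have sub: "vec_subspace d W" and inv: "\<And>g v. g \<in> carrier G \<Longrightarrow> v \<in> W \<Longrightarrow> \<sigma> g *\<^sub>v v \<in> W"
    using W by (auto simp: invariant_subspace_iff)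
  obtain m B where B: "B \<in> carrier_mat d m" "inj_mat B" "mat_range B = W"
    by (rule subspace_basis_exists[OF sub])
  obtain L where L: "L \<in> carrier_mat m d" "L * B = 1\<^sub>m m"
    by (rule inj_mat_left_inverse[OF B(1,2)])
  show ?thesis
    using restrict_representation[OF \<sigma> B(1) L] inv inj_mat_proper_range_dim_less[OF B(1,2)] B L
    by (intro that) auto
qed

lemma averaging_intertwiner:
  assumes G: "group G" and fin: "finite (carrier G)"
    and \<sigma>: "representation G d \<sigma>" and \<tau>: "representation G m \<tau>"
    and B: "B \<in> carrier_mat d m" "intertwining G \<sigma> \<tau> B"
    and L: "L \<in> carrier_mat m d" "L * B = 1\<^sub>m m"
  defines "Q \<equiv> mat_sum m d (carrier G) (\<lambda>h. \<tau> h * L * \<sigma> (inv\<^bsub>G\<^esub> h))"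
  shows "Q * B = of_nat (card (carrier G)) \<cdot>\<^sub>m 1\<^sub>m m"
    and "\<And>g. g \<in> carrier G \<Longrightarrow> Q * \<sigma> g = \<tau> g * Q"
proof -
  interpret group G by (fact G)
  note \<sigma>c = representation_carrier[OF \<sigma>] and \<tau>c = representation_carrier[OF \<tau>]
  have term_carrier: "\<tau> h * L * \<sigma> (inv\<^bsub>G\<^esub> h) \<in> carrier_mat m d" if "h \<in> carrier G" for h
    using that L \<tau>c \<sigma>c by (intro mult_carrier_mat) auto
  have "Q * B = mat_sum m m (carrier G) (\<lambda>h. \<tau> h * L * \<sigma> (inv\<^bsub>G\<^esub> h) * B)"
    unfolding Q_def by (rule mat_sum_mult_right[OF term_carrier B(1)])
  also have "\<dots> = mat_sum m m (carrier G) (\<lambda>h. 1\<^sub>m m)"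
  proof (rule mat_sum_cong)
    fix h assume h: "h \<in> carrier G"
    then have ih: "inv\<^bsub>G\<^esub> h \<in> carrier G"
      by simp
    have \<tau>L: "\<tau> h * L \<in> carrier_mat m d"
      using \<tau>c[OF h] L by simp
    have "\<tau> h * L * \<sigma> (inv\<^bsub>G\<^esub> h) * B = \<tau> h * L * (B * \<tau> (inv\<^bsub>G\<^esub> h))"
      using B(2) ih by (simp add: assoc_mult_mat[OF \<tau>L \<sigma>c[OF ih] B(1)] intertwining_def)
    also have "\<dots> = \<tau> h * (L * B) * \<tau> (inv\<^bsub>G\<^esub> h)"
      using \<tau>c[OF h] L B by (simp add: assoc_mult_mat[OF \<tau>L B(1) \<tau>c[OF ih], symmetric]
          assoc_mult_mat[OF \<tau>c[OF h] L(1) B(1)])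
    also have "\<dots> = \<tau> (h \<otimes>\<^bsub>G\<^esub> inv\<^bsub>G\<^esub> h)"
      using L \<tau>c[OF h] by (simp add: representation_mult[OF \<tau> h ih])
    finally show "\<tau> h * L * \<sigma> (inv\<^bsub>G\<^esub> h) * B = 1\<^sub>m m"
      using h by (simp add: representation_one[OF \<tau>])
  qed
  also have "\<dots> = of_nat (card (carrier G)) \<cdot>\<^sub>m 1\<^sub>m m"
    by (simp add: mat_sum_const[OF fin])
  finally show "Q * B = of_nat (card (carrier G)) \<cdot>\<^sub>m 1\<^sub>m m" .
  fix g assume g: "g \<in> carrier G"
  have bij: "bij_betw (\<lambda>h. g \<otimes>\<^bsub>G\<^esub> h) (carrier G) (carrier G)"
    by (rule bij_betwI[where g = "\<lambda>h. inv\<^bsub>G\<^esub> g \<otimes>\<^bsub>G\<^esub> h"]) (use g in \<open>auto simp flip: m_assoc\<close>)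
  have "Q * \<sigma> g = mat_sum m d (carrier G) (\<lambda>h. \<tau> h * L * \<sigma> (inv\<^bsub>G\<^esub> h) * \<sigma> g)"
    unfolding Q_def by (rule mat_sum_mult_right[OF term_carrier \<sigma>c[OF g]])
  also have "\<dots> = mat_sum m d (carrier G) (\<lambda>h. \<tau> h * L * \<sigma> (inv\<^bsub>G\<^esub> h \<otimes>\<^bsub>G\<^esub> g))"
  proof (rule mat_sum_cong)
    fix h assume h: "h \<in> carrier G"
    have \<tau>L: "\<tau> h * L \<in> carrier_mat m d"
      using \<tau>c[OF h] L by simp
    show "\<tau> h * L * \<sigma> (inv\<^bsub>G\<^esub> h) * \<sigma> g = \<tau> h * L * \<sigma> (inv\<^bsub>G\<^esub> h \<otimes>\<^bsub>G\<^esub> g)"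
      using h g by (simp add: assoc_mult_mat[OF \<tau>L \<sigma>c \<sigma>c[OF g]] representation_mult[OF \<sigma>])
  qed
  also have "\<dots> = mat_sum m d (carrier G) (\<lambda>h. \<tau> (g \<otimes>\<^bsub>G\<^esub> h) * L * \<sigma> (inv\<^bsub>G\<^esub> (g \<otimes>\<^bsub>G\<^esub> h) \<otimes>\<^bsub>G\<^esub> g))"
    by (rule mat_sum_reindex[OF bij, symmetric])
  also have "\<dots> = mat_sum m d (carrier G) (\<lambda>h. \<tau> g * (\<tau> h * L * \<sigma> (inv\<^bsub>G\<^esub> h)))"
  proof (rule mat_sum_cong)
    fix h assume h: "h \<in> carrier G"
    have "inv\<^bsub>G\<^esub> (g \<otimes>\<^bsub>G\<^esub> h) \<otimes>\<^bsub>G\<^esub> g = inv\<^bsub>G\<^esub> h"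
      using g h by (simp add: inv_mult_group m_assoc)
    moreover have "\<tau> h * L \<in> carrier_mat m d"
      using \<tau>c[OF h] L by simp
    ultimately show "\<tau> (g \<otimes>\<^bsub>G\<^esub> h) * L * \<sigma> (inv\<^bsub>G\<^esub> (g \<otimes>\<^bsub>G\<^esub> h) \<otimes>\<^bsub>G\<^esub> g) =
        \<tau> g * (\<tau> h * L * \<sigma> (inv\<^bsub>G\<^esub> h))"
      using h by (simp add: representation_mult[OF \<tau> g h] assoc_mult_mat[OF \<tau>c[OF g] \<tau>c[OF h] L(1)]
          assoc_mult_mat[OF \<tau>c[OF g] _ \<sigma>c])
  qed
  also have "\<dots> = \<tau> g * Q"
    unfolding Q_def by (rule mat_sum_mult_left[OF term_carrier \<tau>c[OF g], symmetric])
  finally show "Q * \<sigma> g = \<tau> g * Q" .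
qed

lemma maschke:
  assumes G: "group G" and fin: "finite (carrier G)" and \<sigma>: "representation G d \<sigma>"
    and W: "invariant_subspace G d \<sigma> W"
  obtains W' where "invariant_subspace G d \<sigma> W'" "W \<inter> W' = {0\<^sub>v d}"
    "\<And>v. v \<in> carrier_vec d \<Longrightarrow> \<exists>w \<in> W. \<exists>w' \<in> W'. v = w + w'"
proof -
  obtain m B L \<tau> where B: "B \<in> carrier_mat d m" "mat_range B = W" "intertwining G \<sigma> \<tau> B"
    and L: "L \<in> carrier_mat m d" "L * B = 1\<^sub>m m" and \<tau>: "representation G m \<tau>"
    by (rule invariant_subspace_subrep[OF \<sigma> W])
  \<comment> \<open>As \<open>Q * B = |G| \<cdot> 1\<close>, \<open>v \<mapsto> B (Q v) / |G|\<close> is an equivariant projection onto \<open>W\<close>, so the kernel of \<open>Q\<close> is an invariant complement.\<close>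
  define Q where "Q = mat_sum m d (carrier G) (\<lambda>h. \<tau> h * L * \<sigma> (inv\<^bsub>G\<^esub> h))"
  define n where "n = card (carrier G)"
  have Q: "Q \<in> carrier_mat m d"
    by (simp add: Q_def)
  have n: "of_nat n \<noteq> (0 :: complex)"
    using fin monoid.one_closed[OF group.is_monoid[OF G]] by (auto simp: n_def card_eq_0_iff)
  have "Q * B = of_nat n \<cdot>\<^sub>m 1\<^sub>m m"
    unfolding Q_def n_def by (rule averaging_intertwiner(1)[OF G fin \<sigma> \<tau> B(1,3) L])
  then have QB: "Q *\<^sub>v (B *\<^sub>v x) = of_nat n \<cdot>\<^sub>v x" if "x \<in> carrier_vec m" for x
    using that by (simp add: assoc_mult_mat_vec[OF Q B(1) that, symmetric] smult_mat_mult_vec[of _ m m])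
  have Q\<sigma>: "Q * \<sigma> g = \<tau> g * Q" if "g \<in> carrier G" for g
    unfolding Q_def by (rule averaging_intertwiner(2)[OF G fin \<sigma> \<tau> B(1,3) L that])
  define W' where "W' = {v \<in> carrier_vec d. Q *\<^sub>v v = 0\<^sub>v m}"
  have "invariant_subspace G d \<sigma> W'"
    unfolding invariant_subspace_def
  proof (intro conjI ballI allI)
    show "W' \<subseteq> carrier_vec d" "0\<^sub>v d \<in> W'"
      using Q by (auto simp: W'_def)
    fix v assume v: "v \<in> W'"
    show "v + w \<in> W'" if "w \<in> W'" for w
      using v that Q by (simp add: W'_def mult_add_distrib_mat_vec[OF Q])
    show "c \<cdot>\<^sub>v v \<in> W'" for c
      using v Q by (auto simp: W'_def mult_mat_vec[OF Q] intro!: eq_vecI)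
    show "\<sigma> g *\<^sub>v v \<in> W'" if g: "g \<in> carrier G" for g
    proof -
      have "Q *\<^sub>v (\<sigma> g *\<^sub>v v) = \<tau> g *\<^sub>v (Q *\<^sub>v v)"
        using v Q representation_carrier[OF \<sigma> g] representation_carrier[OF \<tau> g]
        by (simp add: W'_def Q\<sigma>[OF g] flip: assoc_mult_mat_vec[of Q m d _ d] assoc_mult_mat_vec[of _ m m Q d])
      then show ?thesis
        using v representation_carrier[OF \<sigma> g] representation_carrier[OF \<tau> g] by (simp add: W'_def)
    qed
  qed
  moreover have "W \<inter> W' = {0\<^sub>v d}"
  proof
    show "W \<inter> W' \<subseteq> {0\<^sub>v d}"
    proof
      fix v assume "v \<in> W \<inter> W'"
      then obtain x where x: "x \<in> carrier_vec m" "v = B *\<^sub>v x" and "Q *\<^sub>v v = 0\<^sub>v m"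
        using B(1,2) by (auto simp: mat_range_def W'_def)
      then have nx: "of_nat n \<cdot>\<^sub>v x = 0\<^sub>v m"
        using QB by simp
      have "x $ i = 0" if "i < m" for i
        using arg_cong[OF nx, of "\<lambda>v. v $ i"] n x(1) that by simp
      then have "x = 0\<^sub>v m"
        using x(1) by (intro eq_vecI) auto
      then show "v \<in> {0\<^sub>v d}"
        using x B(1) by simp
    qed
    show "{0\<^sub>v d} \<subseteq> W \<inter> W'"
      using W Q by (auto simp: invariant_subspace_def W'_def)
  qed
  moreover have "\<exists>w \<in> W. \<exists>w' \<in> W'. v = w + w'" if v: "v \<in> carrier_vec d" for v
  proof -
    define x where "x = (1 / of_nat n) \<cdot>\<^sub>v (Q *\<^sub>v v)"
    have x: "x \<in> carrier_vec m"
      using Q v by (simp add: x_def)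
    have "B *\<^sub>v x \<in> W"
      using B(1,2) x by (auto simp: mat_range_def)
    moreover have "v - B *\<^sub>v x \<in> W'"
    proof -
      have "Q *\<^sub>v (v - B *\<^sub>v x) = Q *\<^sub>v v - of_nat n \<cdot>\<^sub>v x"
        using Q v B(1) x QB by (simp add: mult_minus_distrib_mat_vec[OF Q])
      also have "\<dots> = 0\<^sub>v m"
        using n Q v by (auto simp: x_def intro!: eq_vecI)
      finally show ?thesis
        using v B(1) x by (simp add: W'_def)
    qed
    moreover have "v = B *\<^sub>v x + (v - B *\<^sub>v x)"
      using v B(1) x by (auto intro!: eq_vecI)
    ultimately show ?thesis
      by blast
  qed
  ultimately show ?thesis
    by (rule that)
qed

lemma reducible_rep_decomposition:
  assumes G: "group G" and fin: "finite (carrier G)" and \<sigma>: "representation G d \<sigma>"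
    and red: "\<not> irreducible_rep G d \<sigma>" and d: "d > 0"
  obtains m1 B1 \<tau>1 m2 B2 \<tau>2 where "m1 < d" "B1 \<in> carrier_mat d m1" "representation G m1 \<tau>1"
    "intertwining G \<sigma> \<tau>1 B1" "m2 < d" "B2 \<in> carrier_mat d m2" "representation G m2 \<tau>2"
    "intertwining G \<sigma> \<tau>2 B2" "\<And>v. v \<in> carrier_vec d \<Longrightarrow> \<exists>w1 \<in> mat_range B1. \<exists>w2 \<in> mat_range B2. v = w1 + w2"
proof -
  obtain W where W: "invariant_subspace G d \<sigma> W" "W \<noteq> {0\<^sub>v d}" "W \<noteq> carrier_vec d"
    using red \<sigma> d by (auto simp: irreducible_rep_def)
  obtain W' where W': "invariant_subspace G d \<sigma> W'" "W \<inter> W' = {0\<^sub>v d}"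
    and span: "\<And>v. v \<in> carrier_vec d \<Longrightarrow> \<exists>w \<in> W. \<exists>w' \<in> W'. v = w + w'"
    using maschke[OF G fin \<sigma> W(1)] by blast
  have "W' \<noteq> carrier_vec d"
    using W W' by (auto simp: invariant_subspace_def)
  obtain m1 B1 \<tau>1 where "B1 \<in> carrier_mat d m1" "mat_range B1 = W" "representation G m1 \<tau>1"
    "intertwining G \<sigma> \<tau>1 B1" "m1 < d"
    using invariant_subspace_subrep[OF \<sigma> W(1)] W(3) by metis
  moreover obtain m2 B2 \<tau>2 where "B2 \<in> carrier_mat d m2" "mat_range B2 = W'" "representation G m2 \<tau>2"
    "intertwining G \<sigma> \<tau>2 B2" "m2 < d"
    using invariant_subspace_subrep[OF \<sigma> W'(1)] \<open>W' \<noteq> carrier_vec d\<close> by metis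
  ultimately show ?thesis
    using that span by blast
qed

lemma mix_mat_append_range_fixed:
  assumes \<sigma>: "representation G d \<sigma>"
    and \<tau>1: "representation G m1 \<tau>1" and B1: "B1 \<in> carrier_mat d m1" "intertwining G \<sigma> \<tau>1 B1"
    and \<tau>2: "representation G m2 \<tau>2" and B2: "B2 \<in> carrier_mat d m2" "intertwining G \<sigma> \<tau>2 B2"
    and span: "\<And>v. v \<in> carrier_vec d \<Longrightarrow> \<exists>w1 \<in> mat_range B1. \<exists>w2 \<in> mat_range B2. v = w1 + w2"
    and xs1: "valid_mixing G xs1" "mat_range (mix_mat m1 \<tau>1 xs1) \<subseteq> fixed_vecs G m1 \<tau>1"
    and xs2: "valid_mixing G xs2" "mat_range (mix_mat m2 \<tau>2 xs2) \<subseteq> fixed_vecs G m2 \<tau>2"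
  shows "mat_range (mix_mat d \<sigma> (xs1 @ xs2)) \<subseteq> fixed_vecs G d \<sigma>"
proof
  let ?T1 = "mix_mat d \<sigma> xs1" and ?T2 = "mix_mat d \<sigma> xs2"
  have T1: "?T1 \<in> carrier_mat d d" and T2: "?T2 \<in> carrier_mat d d"
    using mix_mat_carrier[OF \<sigma>] xs1 xs2 by auto
  have fixed_closed: "u + w \<in> fixed_vecs G d \<sigma>" if "u \<in> fixed_vecs G d \<sigma>" "w \<in> fixed_vecs G d \<sigma>" for u w
    using fixed_vecs_invariant[OF \<sigma>] that by (simp add: invariant_subspace_def)
  have pull: "mix_mat d \<sigma> ys *\<^sub>v (B *\<^sub>v x) = B *\<^sub>v (mix_mat m \<tau> ys *\<^sub>v x)"
    if "representation G m \<tau>" "B \<in> carrier_mat d m" "intertwining G \<sigma> \<tau> B" "valid_mixing G ys"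
      "x \<in> carrier_vec m" for m \<tau> B ys x
    using that mix_mat_intertwine[OF \<sigma> that(1-4)] mix_mat_carrier[OF \<sigma> that(4)] mix_mat_carrier[OF that(1,4)]
    by (simp flip: assoc_mult_mat_vec[of _ d d B m] add: assoc_mult_mat_vec[of B d m _ m])
  fix u assume "u \<in> mat_range (mix_mat d \<sigma> (xs1 @ xs2))"
  then obtain v where v: "v \<in> carrier_vec d" and u: "u = ?T1 *\<^sub>v (?T2 *\<^sub>v v)"
    using T1 T2 by (auto simp: mat_range_def mix_mat_append[OF \<sigma> xs1(1) xs2(1)])
  obtain x y where x: "x \<in> carrier_vec m1" and y: "y \<in> carrier_vec m2" and vxy: "v = B1 *\<^sub>v x + B2 *\<^sub>v y"
    using span[OF v] B1 B2 by (auto simp: mat_range_def)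
  have x': "mix_mat m1 \<tau>1 xs2 *\<^sub>v x \<in> carrier_vec m1"
    using mix_mat_carrier[OF \<tau>1 xs2(1)] x by simp
  have "?T1 *\<^sub>v (?T2 *\<^sub>v (B1 *\<^sub>v x)) = B1 *\<^sub>v (mix_mat m1 \<tau>1 xs1 *\<^sub>v (mix_mat m1 \<tau>1 xs2 *\<^sub>v x))"
    using pull[OF \<tau>1 B1 xs2(1) x] pull[OF \<tau>1 B1 xs1(1) x'] by simp
  also have "\<dots> \<in> fixed_vecs G d \<sigma>"
    using xs1(2) mix_mat_carrier[OF \<tau>1 xs1(1)] x'
    by (intro intertwining_fixed_vecs[OF \<sigma> \<tau>1 B1]) (auto simp: mat_range_def)
  finally have part1: "?T1 *\<^sub>v (?T2 *\<^sub>v (B1 *\<^sub>v x)) \<in> fixed_vecs G d \<sigma>" .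
  have "B2 *\<^sub>v (mix_mat m2 \<tau>2 xs2 *\<^sub>v y) \<in> fixed_vecs G d \<sigma>"
    using xs2(2) mix_mat_carrier[OF \<tau>2 xs2(1)] y
    by (intro intertwining_fixed_vecs[OF \<sigma> \<tau>2 B2]) (auto simp: mat_range_def)
  then have part2: "?T1 *\<^sub>v (?T2 *\<^sub>v (B2 *\<^sub>v y)) \<in> fixed_vecs G d \<sigma>"
    using pull[OF \<tau>2 B2 xs2(1) y] mix_mat_fixes[OF \<sigma> xs1(1)] by simp
  have "u = ?T1 *\<^sub>v (?T2 *\<^sub>v (B1 *\<^sub>v x)) + ?T1 *\<^sub>v (?T2 *\<^sub>v (B2 *\<^sub>v y))"
    using T1 T2 B1(1) B2(1) x y
    by (simp add: u vxy mult_add_distrib_mat_vec[OF T2] mult_add_distrib_mat_vec[OF T1])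
  with part1 part2 show "u \<in> fixed_vecs G d \<sigma>"
    by (simp add: fixed_closed)
qed

lemma exists_mix_mat_range_fixed:
  assumes G: "group G" and fin: "finite (carrier G)"
    and irreps: "\<And>d \<rho>. irreducible_rep G d \<rho> \<Longrightarrow> \<not> trivial_rep G d \<rho> \<Longrightarrow> mixable_rep G d \<rho>"
    and \<sigma>: "representation G d \<sigma>"
  shows "\<exists>xs. valid_mixing G xs \<and> mat_range (mix_mat d \<sigma> xs) \<subseteq> fixed_vecs G d \<sigma>"
  using \<sigma>
proof (induction d arbitrary: \<sigma> rule: less_induct)
  case (less d)
  have empty_list: ?case if "fixed_vecs G d \<sigma> = carrier_vec d"
    using that by (intro exI[of _ "[]"]) (auto simp: mat_range_def)
  show ?case
  proof (cases "irreducible_rep G d \<sigma>")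
    case irr: True
    show ?thesis
    proof (cases "trivial_rep G d \<sigma>")
      case True
      then show ?thesis
        by (intro empty_list) (auto simp: fixed_vecs_def trivial_rep_def)
    next
      case False
      then obtain xs where "valid_mixing G xs" "mix_mat d \<sigma> xs = 0\<^sub>m d d"
        using irreps irr by (auto simp: mixable_rep_iff)
      then show ?thesis
        using zero_in_fixed_vecs[OF less.prems] by (intro exI[of _ xs]) (auto simp: mat_range_def)
    qed
  next
    case red: False
    show ?thesis
    proof (cases "d = 0")
      case True
      have "x = 0\<^sub>v 0" if "x \<in> carrier_vec 0" for x :: "complex vec"
        using that by (intro eq_vecI) auto
      then show ?thesis
        using True zero_in_fixed_vecs[OF less.prems] by (intro empty_list) (auto simp: fixed_vecs_def)
    next
      case False
      then obtain m1 B1 \<tau>1 m2 B2 \<tau>2 where "m1 < d" "B1 \<in> carrier_mat d m1" "representation G m1 \<tau>1"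
        "intertwining G \<sigma> \<tau>1 B1" "m2 < d" "B2 \<in> carrier_mat d m2" "representation G m2 \<tau>2"
        "intertwining G \<sigma> \<tau>2 B2" "\<And>v. v \<in> carrier_vec d \<Longrightarrow> \<exists>w1 \<in> mat_range B1. \<exists>w2 \<in> mat_range B2. v = w1 + w2"
        using reducible_rep_decomposition[OF G fin less.prems red] by blast
      moreover from this obtain xs1 xs2 where
        "valid_mixing G xs1" "mat_range (mix_mat m1 \<tau>1 xs1) \<subseteq> fixed_vecs G m1 \<tau>1"
        "valid_mixing G xs2" "mat_range (mix_mat m2 \<tau>2 xs2) \<subseteq> fixed_vecs G m2 \<tau>2"
        using less.IH by meson
      ultimately show ?thesis
        by (intro exI[of _ "xs1 @ xs2"]) (simp add: mix_mat_append_range_fixed[OF less.prems])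
    qed
  qed
qed

section \<open>The regular representation\<close>

lemma bij_betw_the_inv_into_lessThan:
  fixes n :: nat
  assumes "bij_betw e {..<n} A" "a \<in> A"
  shows "the_inv_into {..<n} e a < n" "e (the_inv_into {..<n} e a) = a"
  using bij_betwE[OF bij_betw_the_inv_into[OF assms(1)]] assms f_the_inv_into_f_bij_betw[OF assms] by auto

lemma sum_of_bool_mult_bij_betw:
  fixes n :: nat
  assumes e: "bij_betw e {..<n} A" and a: "a \<in> A"
  shows "(\<Sum>l<n. of_bool (e l = a) * f l) = (f (the_inv_into {..<n} e a) :: 'c :: semiring_1)"
proof -
  have "{..<n} \<inter> {l. e l = a} = {the_inv_into {..<n} e a}"
    using e bij_betw_the_inv_into_lessThan[OF e a] by (auto simp: bij_betw_def inj_on_eq_iff)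
  then show ?thesis
    by (simp add: sum_of_bool_mult_eq)
qed

definition regular_rep :: "('a, 'b) monoid_scheme \<Rightarrow> (nat \<Rightarrow> 'a) \<Rightarrow> nat \<Rightarrow> 'a \<Rightarrow> complex mat" where
  "regular_rep G e n g = mat n n (\<lambda>(i, j). of_bool (e i = g \<otimes>\<^bsub>G\<^esub> e j))"

context
  fixes G :: "('a, 'b) monoid_scheme" (structure) and e :: "nat \<Rightarrow> 'a" and n :: nat
  assumes G: "group G" and e: "bij_betw e {..<n} (carrier G)"
begin

interpretation group G by (fact G)

private lemma e_carrier: "i < n \<Longrightarrow> e i \<in> carrier G"
  and e_inj: "i < n \<Longrightarrow> j < n \<Longrightarrow> e i = e j \<longleftrightarrow> i = j"
  using e by (auto simp: bij_betw_def inj_on_eq_iff)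

lemma regular_rep_representation: "representation G n (regular_rep G e n)"
  unfolding representation_def
proof (intro conjI ballI)
  show "regular_rep G e n g \<in> carrier_mat n n" for g
    by (simp add: regular_rep_def)
  show "regular_rep G e n \<one> = 1\<^sub>m n"
    by (intro eq_matI) (auto simp: regular_rep_def e_carrier e_inj)
  fix g h assume g: "g \<in> carrier G" and h: "h \<in> carrier G"
  show "regular_rep G e n (g \<otimes> h) = regular_rep G e n g * regular_rep G e n h"
  proof (rule eq_matI)
    fix i j assume "i < dim_row (regular_rep G e n g * regular_rep G e n h)"
      "j < dim_col (regular_rep G e n g * regular_rep G e n h)"
    then have ij: "i < n" "j < n"
      by (simp_all add: regular_rep_def)
    have "(regular_rep G e n g * regular_rep G e n h) $$ (i, j) =
        (\<Sum>l<n. of_bool (e l = h \<otimes> e j) * of_bool (e i = g \<otimes> e l))"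
      using ij by (simp add: regular_rep_def scalar_prod_def lessThan_atLeast0 mult.commute)
    also have "\<dots> = of_bool (e i = g \<otimes> (h \<otimes> e j))"
      using ij h e_carrier bij_betw_the_inv_into_lessThan[OF e] by (subst sum_of_bool_mult_bij_betw[OF e]) auto
    finally show "regular_rep G e n (g \<otimes> h) $$ (i, j) =
        (regular_rep G e n g * regular_rep G e n h) $$ (i, j)"
      using ij g h e_carrier by (simp add: regular_rep_def m_assoc)
  qed (simp_all add: regular_rep_def)
qed

lemma fourier_regular_rep_col:
  assumes "j < n" "e j = \<one>" "i < n"
  shows "fourier G n (regular_rep G e n) f $$ (i, j) = f (e i)"
proof -
  have "carrier G \<inter> {x. e i = x} = {e i}"
    using assms e_carrier by auto
  moreover have "finite (carrier G)"
    using bij_betw_finite[OF e] by simp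
  ultimately show ?thesis
    using assms by (simp add: fourier_index[OF regular_rep_representation] regular_rep_def sum_of_bool_mult_eq
        mult.commute[of "f _"])
qed

lemma regular_rep_fixed_vecs_const:
  assumes v: "v \<in> fixed_vecs G n (regular_rep G e n)" and "i < n" "l < n"
  shows "v $ i = v $ l"
proof -
  define g where "g = e i \<otimes> inv (e l)"
  have g: "g \<in> carrier G"
    using assms by (simp add: g_def e_carrier)
  have "inv g \<otimes> e i = e l"
    using assms e_carrier by (simp add: g_def inv_mult_group m_assoc)
  then have iff: "e i = g \<otimes> e k \<longleftrightarrow> e k = e l" if "k < n" for k
    using inv_solve_left[OF e_carrier[OF that] g e_carrier[OF \<open>i < n\<close>]] by auto
  have "v $ i = (regular_rep G e n g *\<^sub>v v) $ i"
    using v g by (simp add: fixed_vecs_def)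
  also have "\<dots> = (\<Sum>k<n. regular_rep G e n g $$ (i, k) * v $ k)"
    using assms v by (intro index_mult_mat_vec_sum) (simp_all add: regular_rep_def fixed_vecs_def)
  also have "\<dots> = (\<Sum>k<n. of_bool (e k = e l) * v $ k)"
    using assms by (intro sum.cong) (simp_all add: regular_rep_def iff)
  also have "\<dots> = v $ l"
    using assms e_carrier the_inv_into_f_f[OF bij_betw_imp_inj_on[OF e]] by (subst sum_of_bool_mult_bij_betw[OF e]) auto
  finally show ?thesis .
qed

end

lemma pmf_const_on_eq_pmf_of_set:
  assumes fin: "finite A" and supp: "set_pmf \<mu> \<subseteq> A"
    and const: "\<And>x y. x \<in> A \<Longrightarrow> y \<in> A \<Longrightarrow> pmf \<mu> x = pmf \<mu> y"
  shows "\<mu> = pmf_of_set A"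
proof (rule pmf_eqI)
  obtain a where a: "a \<in> A"
    using supp set_pmf_not_empty[of \<mu>] by blast
  have "real (card A) * pmf \<mu> a = 1"
    using sum_pmf_eq_1[OF fin supp] const[OF _ a] by simp
  then have "pmf \<mu> a = 1 / card A"
    by (auto simp: eq_divide_eq mult.commute)
  moreover have "A \<noteq> {}"
    using a by blast
  ultimately show "pmf \<mu> x = pmf (pmf_of_set A) x" for x
    using const[OF _ a] supp fin by (cases "x \<in> A") (auto simp: set_pmf_eq)
qed

lemma mixable_reps_imp_mixable_group:
  assumes G: "group G" and fin: "finite (carrier G)"
    and irreps: "\<And>d \<rho>. irreducible_rep G d \<rho> \<Longrightarrow> \<not> trivial_rep G d \<rho> \<Longrightarrow> mixable_rep G d \<rho>"
  shows "mixable_group G"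
proof -
  define n where "n = card (carrier G)"
  obtain e where e: "bij_betw e {..<n} (carrier G)"
    using ex_bij_betw_nat_finite[OF fin] by (auto simp: n_def lessThan_atLeast0)
  let ?R = "regular_rep G e n"
  have R: "representation G n ?R"
    by (rule regular_rep_representation[OF G e])
  obtain xs where xs: "valid_mixing G xs" and fixed: "mat_range (mix_mat n ?R xs) \<subseteq> fixed_vecs G n ?R"
    using exists_mix_mat_range_fixed[OF G fin irreps R] by blast
  let ?\<mu> = "mix_pmf G xs"
  define j where "j = the_inv_into {..<n} e \<one>\<^bsub>G\<^esub>"
  have j: "j < n" "e j = \<one>\<^bsub>G\<^esub>"
    unfolding j_def using bij_betw_the_inv_into_lessThan[OF e] monoid.one_closed[OF group.is_monoid[OF G]] by auto
  define c where "c = mix_mat n ?R xs *\<^sub>v unit_vec n j"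
  have c: "c \<in> fixed_vecs G n ?R"
    using fixed mix_mat_carrier[OF R xs] by (auto simp: c_def mat_range_def)
  have c_index: "c $ i = pmf ?\<mu> (e i)" if "i < n" for i
    using that j mix_mat_carrier[OF R xs]
    by (simp add: c_def mix_mat_eq_fourier[OF G fin R xs] fourier_regular_rep_col[OF G e])
  have "pmf ?\<mu> (e i) = pmf ?\<mu> (e l)" if "i < n" "l < n" for i l
    using regular_rep_fixed_vecs_const[OF G e c that] c_index[OF that(1)] c_index[OF that(2)] by simp
  then have "pmf ?\<mu> x = pmf ?\<mu> y" if "x \<in> carrier G" "y \<in> carrier G" for x y
    using bij_betw_the_inv_into_lessThan[OF e that(1)] bij_betw_the_inv_into_lessThan[OF e that(2)] by metis
  then have "?\<mu> = pmf_of_set (carrier G)"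
    by (rule pmf_const_on_eq_pmf_of_set[OF fin set_pmf_mix_pmf[OF G xs]])
  with xs show ?thesis
    by (auto simp: mixable_group_iff)
qed

theorem mainTheorem12:
  fixes G :: "('a, 'b) monoid_scheme"
  assumes "group G" and "finite (carrier G)"
  shows "mixable_group G \<longleftrightarrow>
    (\<forall>(d::nat) (\<rho>::'a \<Rightarrow> complex mat).
       irreducible_rep G d \<rho> \<and> \<not> trivial_rep G d \<rho> \<longrightarrow> mixable_rep G d \<rho>)"
  using mixable_group_imp_mixable_rep[OF assms] mixable_reps_imp_mixable_group[OF assms] by blast

end
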